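(* Let $P$ be a poset with an $\mathbb{R}$-action $\Lambda$, and let $I$ be an interval of $P$. Then for every $\epsilon\ge0$: - $I\subseteq\mathrm{Ex}^\Lambda_\epsilon(I)$; - $\mathrm{Ex}^\Lambda_\epsilon(I)$ is an interval of $P$.
   Context: An interval of a poset $P$ is a nonempty subset $I$ that is convex ($p,q\in I$, $r\in P$, $p\le r\le q$ imply $r\in I$) and connected (any two elements of $I$ are joined by a finite sequence of elements of $I$ with consecutive ones comparable). For $A\subseteq P$ nonempty, $A^\uparrow=\{p\in P:\exists a\in A,\ a\le p\}$ and $A^\downarrow=\{p\in P:\exists a\in A,\ p\le a\}$; by convention $\emptyset^\uparrow=\emptyset^\downarrow=P$. An $\mathbb{R}$-action on $P$ is a family $\{\Lambda_\epsilon\}_{\epsilon\ge0}$ of poset automorphisms of $P$ such that: - $p\le\Lambda_\epsilon(p)$ for all $p$; - $\Lambda_0=\mathrm{id}$; - $\Lambda_\epsilon\circ\Lambda_\zeta=\Lambda_{\epsilon+\zeta}$. The $\Lambda_\epsilon$-thickening of $A\subseteq P$ is $\mathrm{Ex}^\Lambda_\epsilon(A)=\Lambda_\epsilon^{-1}(A)^\uparrow\cap\Lambda_\epsilon(A)^\downarrow$, where $\Lambda_\epsilon^{-1}(A)$ denotes the preimage. *)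

theory Defs
  imports Complex_Main
begin

definition convex_set :: "'a::order set \<Rightarrow> bool" where
  "convex_set I \<longleftrightarrow> (\<forall>p\<in>I. \<forall>q\<in>I. \<forall>r. p \<le> r \<and> r \<le> q \<longrightarrow> r \<in> I)"

definition comparable :: "'a::order \<Rightarrow> 'a \<Rightarrow> bool" where
  "comparable x y \<longleftrightarrow> x \<le> y \<or> y \<le> x"

definition connected_poset_set :: "'a::order set \<Rightarrow> bool" where
  "connected_poset_set I \<longleftrightarrow>
     (\<forall>p\<in>I. \<forall>q\<in>I. \<exists>xs. xs \<noteq> [] \<and> hd xs = p \<and> last xs = q \<and> set xs \<subseteq> I \<and>
        (\<forall>i. Suc i < length xs \<longrightarrow> comparable (xs ! i) (xs ! Suc i)))"

definition poset_interval :: "'a::order set \<Rightarrow> bool" where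
  "poset_interval I \<longleftrightarrow> I \<noteq> {} \<and> convex_set I \<and> connected_poset_set I"

definition up_closure :: "'a::order set \<Rightarrow> 'a set" where
  "up_closure A = (if A = {} then UNIV else {p. \<exists>a\<in>A. a \<le> p})"

definition down_closure :: "'a::order set \<Rightarrow> 'a set" where
  "down_closure A = (if A = {} then UNIV else {p. \<exists>a\<in>A. p \<le> a})"

definition poset_automorphism :: "('a::order \<Rightarrow> 'a) \<Rightarrow> bool" where
  "poset_automorphism f \<longleftrightarrow> bij f \<and> (\<forall>x y. x \<le> y \<longleftrightarrow> f x \<le> f y)"

text \<open>An R-action: Lambda eps is only relevant for eps >= 0.\<close>
definition R_action :: "(real \<Rightarrow> 'a::order \<Rightarrow> 'a) \<Rightarrow> bool" where
  "R_action \<Lambda> \<longleftrightarrow>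
     (\<forall>\<epsilon>\<ge>0. poset_automorphism (\<Lambda> \<epsilon>)) \<and>
     (\<forall>\<epsilon>\<ge>0. \<forall>p. p \<le> \<Lambda> \<epsilon> p) \<and>
     \<Lambda> 0 = id \<and>
     (\<forall>\<epsilon>\<ge>0. \<forall>\<zeta>\<ge>0. \<Lambda> \<epsilon> \<circ> \<Lambda> \<zeta> = \<Lambda> (\<epsilon> + \<zeta>))"

definition thickening :: "(real \<Rightarrow> 'a::order \<Rightarrow> 'a) \<Rightarrow> real \<Rightarrow> 'a set \<Rightarrow> 'a set" where
  "thickening \<Lambda> \<epsilon> A = up_closure (\<Lambda> \<epsilon> -` A) \<inter> down_closure (\<Lambda> \<epsilon> ` A)"

end

theory Submission
  imports Defs
begin

text \<open>Only two properties of \<open>L = \<Lambda> \<epsilon>\<close> matter: \<open>L\<close> is surjective and \<open>p \<le> L p\<close>.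
  The thickening of any set is an intersection of an up-set and a down-set, hence convex.
  Each \<open>x\<close> in the thickening of \<open>I\<close> lies above some \<open>a\<close> with \<open>L a \<in> I\<close>; then \<open>a\<close> and \<open>L a\<close> lie
  in the thickening too, and \<open>x \<ge> a \<le> L a\<close> links \<open>x\<close> to \<open>I\<close> through comparable steps, so
  connectedness is inherited from \<open>I\<close>.\<close>

definition linked_in :: "'a::order set \<Rightarrow> 'a \<Rightarrow> 'a \<Rightarrow> bool" where
  "linked_in S = (\<lambda>p q. p \<in> S \<and> q \<in> S \<and> comparable p q)\<^sup>*\<^sup>*"

lemma linked_in_step: "p \<in> S \<Longrightarrow> q \<in> S \<Longrightarrow> comparable p q \<Longrightarrow> linked_in S p q"
  unfolding linked_in_def by (rule r_into_rtranclp) simp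

lemma linked_in_trans: "linked_in S p q \<Longrightarrow> linked_in S q r \<Longrightarrow> linked_in S p r"
  unfolding linked_in_def by (rule rtranclp_trans)

lemma linked_in_sym: "linked_in S p q \<Longrightarrow> linked_in S q p"
  unfolding linked_in_def
  by (rule sympD[OF symp_rtranclp]) (auto intro: sympI simp: comparable_def)

lemma linked_in_mono: "linked_in S p q \<Longrightarrow> S \<subseteq> T \<Longrightarrow> linked_in T p q"
  unfolding linked_in_def by (erule rtranclp_mono[THEN predicate2D, rotated]) auto

lemma linked_in_hd_last:
  assumes "xs \<noteq> []" "set xs \<subseteq> S" "successively comparable xs"
  shows "linked_in S (hd xs) (last xs)"
  using assms
proof (induction xs rule: induct_list012)
  case (3 x y xs)
  then have "linked_in S x y" by (simp add: linked_in_step)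
  with 3 show ?case by (auto intro: linked_in_trans)
qed (auto simp: linked_in_def)

lemma path_if_linked_in:
  assumes "linked_in S p q" "p \<in> S"
  shows "\<exists>xs. xs \<noteq> [] \<and> hd xs = p \<and> last xs = q \<and> set xs \<subseteq> S \<and> successively comparable xs"
  using assms(1) unfolding linked_in_def
proof (induction rule: rtranclp_induct)
  case base
  show ?case using assms(2) by (intro exI[of _ "[p]"]) simp
next
  case (step y z)
  then obtain xs where "xs \<noteq> []" "hd xs = p" "last xs = y" "set xs \<subseteq> S" "successively comparable xs"
    by blast
  with step.hyps(2) show ?case
    by (intro exI[of _ "xs @ [z]"]) (auto simp: successively_append_iff)
qed

lemma connected_poset_set_iff_linked_in:
  "connected_poset_set S \<longleftrightarrow> (\<forall>p\<in>S. \<forall>q\<in>S. linked_in S p q)"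
  unfolding connected_poset_set_def successively_conv_nth[symmetric]
  by (metis linked_in_hd_last path_if_linked_in)

lemma convex_set_up_down_closure: "convex_set (up_closure A \<inter> down_closure B)"
  unfolding convex_set_def up_closure_def down_closure_def
  by (auto intro: order_trans)

lemma R_action_surj_extensive:
  assumes "R_action \<Lambda>" "\<epsilon> \<ge> 0"
  shows "surj (\<Lambda> \<epsilon>)" "p \<le> \<Lambda> \<epsilon> p"
proof -
  have "poset_automorphism (\<Lambda> \<epsilon>)" "\<forall>p. p \<le> \<Lambda> \<epsilon> p"
    using assms unfolding R_action_def by simp_all
  then show "surj (\<Lambda> \<epsilon>)" "p \<le> \<Lambda> \<epsilon> p"
    unfolding poset_automorphism_def by (simp_all add: bij_is_surj)
qed

context
  fixes \<Lambda> :: "real \<Rightarrow> 'a::order \<Rightarrow> 'a" and \<epsilon> :: real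
  assumes surj: "surj (\<Lambda> \<epsilon>)" and extensive: "\<And>p. p \<le> \<Lambda> \<epsilon> p"
begin

lemma mem_thickening_iff:
  assumes "A \<noteq> {}"
  shows "x \<in> thickening \<Lambda> \<epsilon> A \<longleftrightarrow> (\<exists>a. \<Lambda> \<epsilon> a \<in> A \<and> a \<le> x) \<and> (\<exists>b\<in>A. x \<le> \<Lambda> \<epsilon> b)"
proof -
  obtain y where "y \<in> A"
    using assms by blast
  moreover obtain a where "\<Lambda> \<epsilon> a = y"
    using surj by (metis surjD)
  ultimately have "\<Lambda> \<epsilon> -` A \<noteq> {}"
    by blast
  then show ?thesis
    using assms unfolding thickening_def up_closure_def down_closure_def by auto
qed

lemma subset_thickening: "A \<subseteq> thickening \<Lambda> \<epsilon> A"
proof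
  fix x assume x: "x \<in> A"
  from surj obtain a where "\<Lambda> \<epsilon> a = x" by (metis surjD)
  with x have "\<Lambda> \<epsilon> a \<in> A \<and> a \<le> x" "x \<le> \<Lambda> \<epsilon> x"
    using extensive by auto
  moreover have "A \<noteq> {}"
    using x by blast
  ultimately show "x \<in> thickening \<Lambda> \<epsilon> A"
    using x by (subst mem_thickening_iff) blast+
qed

lemma linked_in_thickening_to_set:
  assumes "A \<noteq> {}" "x \<in> thickening \<Lambda> \<epsilon> A"
  obtains c where "c \<in> A" "linked_in (thickening \<Lambda> \<epsilon> A) x c"
proof -
  let ?T = "thickening \<Lambda> \<epsilon> A"
  from assms obtain a where a: "\<Lambda> \<epsilon> a \<in> A" "a \<le> x"
    by (auto simp: mem_thickening_iff)
  have "a \<le> \<Lambda> \<epsilon> (\<Lambda> \<epsilon> a)"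
    using extensive order_trans by blast
  with a assms(1) have a_in: "a \<in> ?T"
    by (auto simp: mem_thickening_iff)
  have La_in: "\<Lambda> \<epsilon> a \<in> ?T"
    using a(1) subset_thickening by blast
  have "linked_in ?T x a"
    using assms(2) a_in a(2) by (simp add: linked_in_step comparable_def)
  moreover have "linked_in ?T a (\<Lambda> \<epsilon> a)"
    using a_in La_in extensive by (simp add: linked_in_step comparable_def)
  ultimately show thesis
    using a(1) that linked_in_trans by blast
qed

lemma connected_thickening:
  assumes "A \<noteq> {}" "connected_poset_set A"
  shows "connected_poset_set (thickening \<Lambda> \<epsilon> A)"
  unfolding connected_poset_set_iff_linked_in
proof (intro ballI)
  let ?T = "thickening \<Lambda> \<epsilon> A"
  fix p q assume "p \<in> ?T" "q \<in> ?T"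
  with assms(1) obtain c d where c: "c \<in> A" "linked_in ?T p c" and d: "d \<in> A" "linked_in ?T q d"
    by (metis linked_in_thickening_to_set)
  have "linked_in ?T c d"
    using assms(2) c(1) d(1) linked_in_mono[OF _ subset_thickening]
    by (auto simp: connected_poset_set_iff_linked_in)
  then have "linked_in ?T p d"
    by (rule linked_in_trans[OF c(2)])
  then show "linked_in ?T p q"
    by (rule linked_in_trans[OF _ linked_in_sym[OF d(2)]])
qed

lemma poset_interval_thickening:
  assumes "poset_interval I"
  shows "poset_interval (thickening \<Lambda> \<epsilon> I)"
proof -
  have "I \<noteq> {}" "connected_poset_set I"
    using assms unfolding poset_interval_def by auto
  moreover have "convex_set (thickening \<Lambda> \<epsilon> I)"
    unfolding thickening_def by (rule convex_set_up_down_closure)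
  ultimately show ?thesis
    unfolding poset_interval_def
    using subset_thickening[of I] connected_thickening[of I] by blast
qed

end

theorem proposition2p11:
  fixes \<Lambda> :: "real \<Rightarrow> 'a::order \<Rightarrow> 'a" and I :: "'a set" and \<epsilon> :: real
  assumes "R_action \<Lambda>" and "poset_interval I" and "\<epsilon> \<ge> 0"
  shows "I \<subseteq> thickening \<Lambda> \<epsilon> I \<and> poset_interval (thickening \<Lambda> \<epsilon> I)"
proof -
  note action = R_action_surj_extensive[OF assms(1,3)]
  show ?thesis
    using subset_thickening[of \<Lambda> \<epsilon>, OF action]
      poset_interval_thickening[of \<Lambda> \<epsilon>, OF action assms(2)] by blast
qed

end
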